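(* Let $i\in\{1,2\}$ and let $(X,e,\mu)$ be an $\mathrm{NP}_i$-digital H-space with $X$ $\mathrm{NP}_i$-irreducible. Then for every $x\in X_e$, the maps $\mu_x$ and $\nu_x$ are isomorphisms $X\to X$.
   Context: A digital image is a finite set $X\subset\mathbb{Z}^n$ with a reflexive symmetric adjacency relation (a finite reflexive graph); continuous maps send adjacent points to adjacent points; an isomorphism is a continuous bijection with continuous inverse. On products, $\mathrm{NP}_u$ declares two tuples adjacent iff coordinates are adjacent in at most $u$ positions and equal elsewhere. An $\mathrm{NP}_i$-homotopy from $f$ to $g:X\to Y$ is an $\mathrm{NP}_i$-continuous $H:X\times[0,m]_{\mathbb{Z}}\to Y$ with $H(\cdot,0)=f$, $H(\cdot,m)=g$; write $f\simeq_i g$. $X$ is $\mathrm{NP}_i$-irreducible if it is not $\mathrm{NP}_i$-homotopy equivalent to a digital image with fewer points. $(f,g)(x)=(f(x),g(x))$; $c_e$ is constant at $e$. An $\mathrm{NP}_i$-digital H-space is $(X,e,\mu)$ with $\mu:X\times X\to X$ $\mathrm{NP}_i$-continuous, $\mu\circ(\mathrm{id}_X,c_e)\simeq_i\mathrm{id}_X$, $\mu\circ(c_e,\mathrm{id}_X)\simeq_i\mathrm{id}_X$ (homotopies need not be pointed). $\mu_x(y)=\mu(x,y)$, $\nu_x(y)=\mu(y,x)$; $X_e$ is the connected component of $e$. *)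

theory Defs
  imports Main
begin

text \<open>Points of Z^n are represented as integer lists of length n.\<close>

type_synonym pt = "int list"

definition digital_image :: "pt set \<Rightarrow> (pt \<Rightarrow> pt \<Rightarrow> bool) \<Rightarrow> bool" where
  "digital_image X adj \<longleftrightarrow> finite X \<and> (\<exists>n. \<forall>x\<in>X. length x = n)
     \<and> (\<forall>x\<in>X. adj x x) \<and> (\<forall>x\<in>X. \<forall>y\<in>X. adj x y \<longrightarrow> adj y x)"

definition dcont :: "'a set \<Rightarrow> ('a \<Rightarrow> 'a \<Rightarrow> bool) \<Rightarrow> 'b set \<Rightarrow> ('b \<Rightarrow> 'b \<Rightarrow> bool) \<Rightarrow> ('a \<Rightarrow> 'b) \<Rightarrow> bool" where
  "dcont X adjX Y adjY f \<longleftrightarrow> (\<forall>x\<in>X. f x \<in> Y) \<and> (\<forall>x\<in>X. \<forall>y\<in>X. adjX x y \<longrightarrow> adjY (f x) (f y))"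

definition diso :: "'a set \<Rightarrow> ('a \<Rightarrow> 'a \<Rightarrow> bool) \<Rightarrow> 'b set \<Rightarrow> ('b \<Rightarrow> 'b \<Rightarrow> bool) \<Rightarrow> ('a \<Rightarrow> 'b) \<Rightarrow> bool" where
  "diso X adjX Y adjY f \<longleftrightarrow> bij_betw f X Y \<and> dcont X adjX Y adjY f \<and> dcont Y adjY X adjX (inv_into X f)"

text \<open>NP_u adjacency on a product of two images: coordinates adjacent
  (adjacency is reflexive), and they differ in at most u positions.\<close>
definition NP :: "nat \<Rightarrow> ('a \<Rightarrow> 'a \<Rightarrow> bool) \<Rightarrow> ('b \<Rightarrow> 'b \<Rightarrow> bool) \<Rightarrow> 'a \<times> 'b \<Rightarrow> 'a \<times> 'b \<Rightarrow> bool" where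
  "NP u adjA adjB p q \<longleftrightarrow> adjA (fst p) (fst q) \<and> adjB (snd p) (snd q)
     \<and> (if fst p \<noteq> fst q then 1 else 0) + (if snd p \<noteq> snd q then 1 else 0) \<le> u"

definition int_adj :: "int \<Rightarrow> int \<Rightarrow> bool" where
  "int_adj s t \<longleftrightarrow> \<bar>s - t\<bar> \<le> 1"

definition np_homotopic :: "nat \<Rightarrow> 'a set \<Rightarrow> ('a \<Rightarrow> 'a \<Rightarrow> bool) \<Rightarrow> 'b set \<Rightarrow> ('b \<Rightarrow> 'b \<Rightarrow> bool)
    \<Rightarrow> ('a \<Rightarrow> 'b) \<Rightarrow> ('a \<Rightarrow> 'b) \<Rightarrow> bool" where
  "np_homotopic i X adjX Y adjY f g \<longleftrightarrow>
     (\<exists>(m::int) H. 0 \<le> m \<and> dcont (X \<times> {0..m}) (NP i adjX int_adj) Y adjY H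
        \<and> (\<forall>x\<in>X. H (x, 0) = f x) \<and> (\<forall>x\<in>X. H (x, m) = g x))"

definition np_htpy_equiv :: "nat \<Rightarrow> 'a set \<Rightarrow> ('a \<Rightarrow> 'a \<Rightarrow> bool) \<Rightarrow> 'b set \<Rightarrow> ('b \<Rightarrow> 'b \<Rightarrow> bool) \<Rightarrow> bool" where
  "np_htpy_equiv i X adjX Y adjY \<longleftrightarrow>
     (\<exists>f g. dcont X adjX Y adjY f \<and> dcont Y adjY X adjX g
        \<and> np_homotopic i X adjX X adjX (g \<circ> f) id
        \<and> np_homotopic i Y adjY Y adjY (f \<circ> g) id)"

definition np_irreducible :: "nat \<Rightarrow> pt set \<Rightarrow> (pt \<Rightarrow> pt \<Rightarrow> bool) \<Rightarrow> bool" where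
  "np_irreducible i X adj \<longleftrightarrow>
     \<not> (\<exists>Y adjY. digital_image Y adjY \<and> card Y < card X \<and> np_htpy_equiv i X adj Y adjY)"

definition np_hspace :: "nat \<Rightarrow> pt set \<Rightarrow> (pt \<Rightarrow> pt \<Rightarrow> bool) \<Rightarrow> pt \<Rightarrow> (pt \<Rightarrow> pt \<Rightarrow> pt) \<Rightarrow> bool" where
  "np_hspace i X adj e \<mu> \<longleftrightarrow> e \<in> X
     \<and> dcont (X \<times> X) (NP i adj adj) X adj (\<lambda>(x, y). \<mu> x y)
     \<and> np_homotopic i X adj X adj (\<lambda>x. \<mu> x e) id
     \<and> np_homotopic i X adj X adj (\<lambda>x. \<mu> e x) id"

definition component :: "'a set \<Rightarrow> ('a \<Rightarrow> 'a \<Rightarrow> bool) \<Rightarrow> 'a \<Rightarrow> 'a set" where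
  "component X adj e = {x \<in> X. (\<lambda>a b. a \<in> X \<and> b \<in> X \<and> adj a b)\<^sup>*\<^sup>* e x}"

end

theory Submission
  imports Defs "HOL-Library.FuncSet"
begin

text \<open>Moving \<open>x\<close> along an edge moves \<open>\<mu>\<^sub>x\<close> by a one-step homotopy, so for \<open>x\<close> in the
  component of \<open>e\<close> both \<open>\<mu>\<^sub>x\<close> and \<open>\<nu>\<^sub>x\<close> are homotopic to the identity. A self-map \<open>f\<close>
  of a finite image that is homotopic to the identity has an idempotent iterate \<open>r = f\<^sup>N\<close>,
  still homotopic to the identity; so \<open>X\<close> is homotopy equivalent to the retract \<open>r(X)\<close>,
  and irreducibility forces \<open>f\<close> to be onto. A continuous bijection of a finite graph maps
  the finite edge set injectively into itself, hence onto it, so its inverse is continuous.\<close>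

lemma np_homotopic_eq:
  assumes "\<forall>x\<in>X. f x = g x" "dcont X adjX Y adjY g"
  shows "np_homotopic i X adjX Y adjY f g"
  unfolding np_homotopic_def
proof (intro exI[of _ "0::int"] exI[of _ "\<lambda>(x, t). g x"] conjI)
  show "dcont (X \<times> {0..0}) (NP i adjX int_adj) Y adjY (\<lambda>(x, t). g x)"
    using assms(2) unfolding dcont_def NP_def by auto
qed (use assms in auto)

lemma np_homotopic_comp_left:
  assumes "dcont Y adjY Z adjZ g" "np_homotopic i X adjX Y adjY f f'"
  shows "np_homotopic i X adjX Z adjZ (g \<circ> f) (g \<circ> f')"
proof -
  obtain m H where "0 \<le> m" "dcont (X \<times> {0..m}) (NP i adjX int_adj) Y adjY H"
    "\<forall>x\<in>X. H (x, 0) = f x" "\<forall>x\<in>X. H (x, m) = f' x"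
    using assms(2) unfolding np_homotopic_def by blast
  then show ?thesis
    unfolding np_homotopic_def
    by (intro exI[of _ m] exI[of _ "g \<circ> H"]) (use assms(1) in \<open>auto simp: dcont_def\<close>)
qed

lemma np_homotopic_trans:
  assumes "np_homotopic i X adjX Y adjY f g" "np_homotopic i X adjX Y adjY g h"
  shows "np_homotopic i X adjX Y adjY f h"
proof -
  obtain m1 H1 where H1: "0 \<le> m1" "dcont (X \<times> {0..m1}) (NP i adjX int_adj) Y adjY H1"
    "\<forall>x\<in>X. H1 (x, 0) = f x" "\<forall>x\<in>X. H1 (x, m1) = g x"
    using assms(1) unfolding np_homotopic_def by blast
  obtain m2 H2 where H2: "0 \<le> m2" "dcont (X \<times> {0..m2}) (NP i adjX int_adj) Y adjY H2"
    "\<forall>x\<in>X. H2 (x, 0) = g x" "\<forall>x\<in>X. H2 (x, m2) = h x"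
    using assms(2) unfolding np_homotopic_def by blast
  define H where "H = (\<lambda>(x, t). if t \<le> m1 then H1 (x, t) else H2 (x, t - m1))"
  have first: "H (x, t) = H1 (x, t)" if "t \<le> m1" for x t
    using that unfolding H_def by auto
  have second: "H (x, t) = H2 (x, t - m1)" if "x \<in> X" "m1 \<le> t" for x t
    using that H1(4) H2(3) unfolding H_def by auto
  have "dcont (X \<times> {0..m1 + m2}) (NP i adjX int_adj) Y adjY H"
    unfolding dcont_def
  proof (intro conjI ballI impI)
    fix p assume "p \<in> X \<times> {0..m1 + m2}"
    then obtain x t where "p = (x, t)" "x \<in> X" "0 \<le> t" "t \<le> m1 + m2" by auto
    then show "H p \<in> Y"
      using first second[of x t] H1(2) H2(2) unfolding dcont_def by (cases "t \<le> m1") auto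
  next
    fix p q assume "p \<in> X \<times> {0..m1 + m2}" "q \<in> X \<times> {0..m1 + m2}"
      and pq: "NP i adjX int_adj p q"
    then obtain x t y s where p: "p = (x, t)" "x \<in> X" "0 \<le> t" "t \<le> m1 + m2"
      and q: "q = (y, s)" "y \<in> X" "0 \<le> s" "s \<le> m1 + m2" by auto
    have "\<bar>t - s\<bar> \<le> 1" using pq p q unfolding NP_def int_adj_def by auto
    then consider "t \<le> m1" "s \<le> m1" | "m1 \<le> t" "m1 \<le> s" by linarith
    then show "adjY (H p) (H q)"
    proof cases
      case 1
      then show ?thesis using p q pq first H1(2) unfolding dcont_def by auto
    next
      case 2
      have "NP i adjX int_adj (x, t - m1) (y, s - m1)"
        using pq p q unfolding NP_def int_adj_def by auto
      then show ?thesis using 2 p q second[of x t] second[of y s] H2(2) unfolding dcont_def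
        by auto
    qed
  qed
  then show ?thesis
    unfolding np_homotopic_def using H1 H2 first second
    by (intro exI[of _ "m1 + m2"] exI[of _ H]) auto
qed

lemma dcont_funpow:
  assumes "dcont X adj X adj f"
  shows "dcont X adj X adj (f ^^ n)"
  by (induction n) (use assms in \<open>auto simp: dcont_def\<close>)

lemma np_homotopic_funpow_id:
  assumes "dcont X adj X adj f" "np_homotopic i X adj X adj f id"
  shows "np_homotopic i X adj X adj (f ^^ n) id"
proof (induction n)
  case 0
  show ?case by (rule np_homotopic_eq) (auto simp: dcont_def)
next
  case (Suc n)
  have "np_homotopic i X adj X adj (f ^^ n \<circ> f) (f ^^ n \<circ> id)"
    by (rule np_homotopic_comp_left[OF dcont_funpow[OF assms(1)] assms(2)])
  then have "np_homotopic i X adj X adj (f ^^ Suc n) (f ^^ n)"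
    by (simp only: funpow_Suc_right comp_id)
  then show ?case using Suc np_homotopic_trans by blast
qed

lemma finite_selfmap_idempotent_iterate:
  assumes "finite X" "\<forall>x\<in>X. f x \<in> X"
  shows "\<exists>N\<ge>1. \<forall>x\<in>X. (f ^^ N) ((f ^^ N) x) = (f ^^ N) x"
proof -
  define F where "F n = restrict (f ^^ n) X" for n
  have "(f ^^ n) x \<in> X" if "x \<in> X" for n x
    using that assms(2) by (induction n) auto
  then have "range F \<subseteq> X \<rightarrow>\<^sub>E X" unfolding F_def by auto
  moreover have "finite (X \<rightarrow>\<^sub>E X)" by (rule finite_PiE) (use assms(1) in auto)
  ultimately have "\<not> inj F" using finite_imageD[of F UNIV] finite_subset by auto
  then obtain a b where "a < b" "F a = F b"
    unfolding inj_def by (metis linorder_neqE_nat)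
  then have ab: "(f ^^ a) x = (f ^^ b) x" if "x \<in> X" for x
    using that unfolding F_def by (metis restrict_apply')
  define d where "d = b - a"
  have d: "d \<ge> 1" "b = d + a" using \<open>a < b\<close> unfolding d_def by auto
  have periodic: "(f ^^ (m + a + j * d)) x = (f ^^ (m + a)) x" if "x \<in> X" for m j x
  proof (induction j)
    case (Suc j)
    have "(f ^^ (m + a + Suc j * d)) x = (f ^^ (m + j * d) \<circ> f ^^ b) x"
      unfolding funpow_add[symmetric] by (simp add: d(2) algebra_simps)
    also have "\<dots> = (f ^^ (m + j * d) \<circ> f ^^ a) x"
      using ab[OF that] by simp
    also have "\<dots> = (f ^^ (m + a + j * d)) x"
      unfolding funpow_add[symmetric] by (simp add: algebra_simps)
    finally show ?case using Suc by simp
  qed simp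
  define N where "N = (a + 1) * d"
  have "(a + 1) * 1 \<le> N" unfolding N_def using d(1) by (rule mult_le_mono2)
  then have "a < N" by simp
  have "(f ^^ N) ((f ^^ N) x) = (f ^^ N) x" if "x \<in> X" for x
  proof -
    have "N - a + a + (a + 1) * d = N + N" using \<open>a < N\<close> unfolding N_def by simp
    then have "(f ^^ N) ((f ^^ N) x) = (f ^^ (N - a + a + (a + 1) * d)) x"
      by (simp only: funpow_add comp_apply)
    also have "\<dots> = (f ^^ N) x"
      using periodic[OF that, of "N - a" "a + 1"] \<open>a < N\<close> by simp
    finally show ?thesis .
  qed
  moreover have "N \<ge> 1" using \<open>a < N\<close> by simp
  ultimately show ?thesis by blast
qed

lemma irreducible_homotopic_id_surj:
  assumes di: "digital_image X adj" and irr: "np_irreducible i X adj"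
    and fc: "dcont X adj X adj f" and fh: "np_homotopic i X adj X adj f id"
  shows "f ` X = X"
proof (rule ccontr)
  assume "f ` X \<noteq> X"
  have fin: "finite X" using di unfolding digital_image_def by auto
  have fX: "f ` X \<subseteq> X" using fc unfolding dcont_def by auto
  then have "card (f ` X) < card X"
    using \<open>f ` X \<noteq> X\<close> fin psubset_card_mono[of X "f ` X"] by blast
  obtain N where N: "N \<ge> 1" "\<forall>x\<in>X. (f ^^ N) ((f ^^ N) x) = (f ^^ N) x"
    using finite_selfmap_idempotent_iterate[OF fin] fX by blast
  define r where "r = f ^^ N"
  have rc: "dcont X adj X adj r" unfolding r_def by (rule dcont_funpow[OF fc])
  then have rX: "r ` X \<subseteq> X" unfolding dcont_def by auto
  have "r ` X \<subseteq> f ` X"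
  proof -
    obtain k where "N = Suc k" using N(1) by (cases N) auto
    then have "r ` X = f ` ((f ^^ k) ` X)" unfolding r_def by (simp add: image_comp)
    moreover have "(f ^^ k) ` X \<subseteq> X" using dcont_funpow[OF fc, of k] unfolding dcont_def by auto
    ultimately show ?thesis by blast
  qed
  then have card_r: "card (r ` X) < card X"
    using \<open>card (f ` X) < card X\<close> card_mono[of "f ` X" "r ` X"] fin by simp
  have "digital_image (r ` X) adj"
    using di rX finite_subset[OF rX] unfolding digital_image_def by blast
  moreover have "np_htpy_equiv i X adj (r ` X) adj"
  proof -
    have "dcont X adj (r ` X) adj r" using rc unfolding dcont_def by auto
    moreover have "dcont (r ` X) adj X adj id" using rX unfolding dcont_def by auto
    moreover have "np_homotopic i X adj X adj (id \<circ> r) id"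
      using np_homotopic_funpow_id[OF fc fh, of N] unfolding r_def by simp
    moreover have "np_homotopic i (r ` X) adj (r ` X) adj (r \<circ> id) id"
      by (rule np_homotopic_eq) (use N(2) in \<open>auto simp: r_def dcont_def\<close>)
    ultimately show ?thesis unfolding np_htpy_equiv_def by blast
  qed
  ultimately show False using irr card_r unfolding np_irreducible_def by blast
qed

lemma finite_surj_dcont_diso:
  assumes fin: "finite X" and fc: "dcont X adj X adj f" and su: "f ` X = X"
  shows "diso X adj X adj f"
proof -
  have inj: "inj_on f X" using su fin by (simp add: inj_on_iff_eq_card)
  define E where "E = {(a, b). a \<in> X \<and> b \<in> X \<and> adj a b}"
  define f2 where "f2 = map_prod f f"
  have "finite E" using fin unfolding E_def by (auto intro: finite_subset[of _ "X \<times> X"])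
  moreover have "f2 ` E \<subseteq> E" using fc unfolding f2_def E_def dcont_def by auto
  moreover have "inj_on f2 E" using inj unfolding f2_def E_def inj_on_def by auto
  ultimately have edges: "f2 ` E = E" using endo_inj_surj by blast
  have "dcont X adj X adj (inv_into X f)"
    unfolding dcont_def
  proof (intro conjI ballI impI)
    fix u assume "u \<in> X"
    then show "inv_into X f u \<in> X" using su by (metis inv_into_into)
  next
    fix u v assume "u \<in> X" "v \<in> X" "adj u v"
    then have "(u, v) \<in> f2 ` E" using edges unfolding E_def by auto
    then obtain a b where "a \<in> X" "b \<in> X" "adj a b" "u = f a" "v = f b"
      unfolding f2_def E_def by auto
    then show "adj (inv_into X f u) (inv_into X f v)" using inv_into_f_f[OF inj] by simp
  qed
  then show ?thesis unfolding diso_def bij_betw_def using inj su fc by blast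
qed

lemma dcont_NP_swap:
  assumes "dcont (A \<times> B) (NP i adjA adjB) Z adjZ m"
  shows "dcont (B \<times> A) (NP i adjB adjA) Z adjZ (m \<circ> prod.swap)"
  using assms unfolding dcont_def NP_def by (auto simp: add.commute)

lemma dcont_NP_slice:
  assumes "dcont (A \<times> B) (NP i adjA adjB) Z adjZ m" "1 \<le> i" "a \<in> A" "adjA a a"
  shows "dcont B adjB Z adjZ (\<lambda>y. m (a, y))"
  using assms unfolding dcont_def NP_def by auto

text \<open>The homotopy switches the first argument from \<open>a\<close> to \<open>b\<close> in one time step, so each
  of its edges changes at most as many coordinates as the underlying edge of \<open>B \<times> [0,1]\<close>.\<close>

lemma np_homotopic_adjacent_slices:
  assumes mc: "dcont (A \<times> B) (NP i adjA adjB) Z adjZ m"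
    and "a \<in> A" "b \<in> A" "adjA a a" "adjA b b" "adjA a b" "adjA b a"
  shows "np_homotopic i B adjB Z adjZ (\<lambda>y. m (a, y)) (\<lambda>y. m (b, y))"
proof -
  define c where "c t = (if t = 0 then a else b)" for t :: int
  define H where "H = (\<lambda>(y, t). m (c t, y))"
  have cA: "c t \<in> A" and cc: "adjA (c t) (c s)" for t s
    using assms unfolding c_def by auto
  have "dcont (B \<times> {0..1}) (NP i adjB int_adj) Z adjZ H"
    unfolding dcont_def
  proof (intro conjI ballI impI)
    fix p assume "p \<in> B \<times> {0..1::int}"
    then show "H p \<in> Z" using mc cA unfolding H_def dcont_def by auto
  next
    fix p q assume "p \<in> B \<times> {0..1::int}" "q \<in> B \<times> {0..1::int}"
      and pq: "NP i adjB int_adj p q"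
    then obtain y t y' s where p: "p = (y, t)" "y \<in> B" and q: "q = (y', s)" "y' \<in> B" by auto
    have "NP i adjA adjB (c t, y) (c s, y')"
      using pq cc unfolding p q NP_def by (auto simp: c_def split: if_splits)
    then show "adjZ (H p) (H q)" using mc cA p q unfolding H_def dcont_def by auto
  qed
  then show ?thesis
    unfolding np_homotopic_def by (intro exI[of _ 1] exI[of _ H]) (auto simp: H_def c_def)
qed

lemma np_hspace_translations_homotopic_id:
  assumes di: "digital_image X adj" and hs: "np_hspace i X adj e \<mu>"
    and "x \<in> component X adj e"
  shows "np_homotopic i X adj X adj (\<lambda>y. \<mu> x y) id \<and> np_homotopic i X adj X adj (\<lambda>y. \<mu> y x) id"
proof -
  let ?m = "\<lambda>(x, y). \<mu> x y"
  have mc: "dcont (X \<times> X) (NP i adj adj) X adj ?m"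
    using hs unfolding np_hspace_def by blast
  have mc': "dcont (X \<times> X) (NP i adj adj) X adj (?m \<circ> prod.swap)"
    by (rule dcont_NP_swap[OF mc])
  have refl: "\<forall>x\<in>X. adj x x" and sym: "\<forall>x\<in>X. \<forall>y\<in>X. adj x y \<longrightarrow> adj y x"
    using di unfolding digital_image_def by auto
  have "(\<lambda>a b. a \<in> X \<and> b \<in> X \<and> adj a b)\<^sup>*\<^sup>* e x"
    using assms(3) unfolding component_def by auto
  then show ?thesis
  proof (induction rule: rtranclp_induct)
    case base
    show ?case using hs unfolding np_hspace_def by blast
  next
    case (step a b)
    then have "adj a a" "adj b b" "adj a b" "adj b a" using refl sym by auto
    with step show ?case
      using np_homotopic_adjacent_slices[OF mc, of b a] np_homotopic_adjacent_slices[OF mc', of b a]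
        np_homotopic_trans by fastforce
  qed
qed

theorem mainTheorem8:
  fixes i :: nat and X :: "pt set" and adj :: "pt \<Rightarrow> pt \<Rightarrow> bool"
    and e :: pt and \<mu> :: "pt \<Rightarrow> pt \<Rightarrow> pt"
  assumes "i \<in> {1, 2}"
    and "digital_image X adj"
    and "np_hspace i X adj e \<mu>"
    and "np_irreducible i X adj"
    and "x \<in> component X adj e"
  shows "diso X adj X adj (\<lambda>y. \<mu> x y) \<and> diso X adj X adj (\<lambda>y. \<mu> y x)"
proof -
  have fin: "finite X" and xx: "adj x x" and "1 \<le> i"
    using assms(1,2,5) unfolding digital_image_def component_def by auto
  have mc: "dcont (X \<times> X) (NP i adj adj) X adj (\<lambda>(x, y). \<mu> x y)"
    using assms(3) unfolding np_hspace_def by blast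
  have x: "x \<in> X" using assms(5) unfolding component_def by auto
  have c1: "dcont X adj X adj (\<lambda>y. \<mu> x y)"
    using dcont_NP_slice[OF mc \<open>1 \<le> i\<close> x xx] by simp
  have c2: "dcont X adj X adj (\<lambda>y. \<mu> y x)"
    using dcont_NP_slice[OF dcont_NP_swap[OF mc] \<open>1 \<le> i\<close> x xx] by simp
  have h: "np_homotopic i X adj X adj (\<lambda>y. \<mu> x y) id" "np_homotopic i X adj X adj (\<lambda>y. \<mu> y x) id"
    using np_hspace_translations_homotopic_id[OF assms(2,3,5)] by auto
  show ?thesis
    using finite_surj_dcont_diso[OF fin c1 irreducible_homotopic_id_surj[OF assms(2,4) c1 h(1)]]
      finite_surj_dcont_diso[OF fin c2 irreducible_homotopic_id_surj[OF assms(2,4) c2 h(2)]]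
    by blast
qed

end
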